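(* Let $\mathscr G=(\mathscr V,\mathscr E)$ be a finite connected graph with $N$ vertices, let $M\ge 0$ be an integer, and let $(X_t)_{t\in\mathbb N}$ be the uniform reshuffling model on $\mathscr G$ with $M$ coins, started from an arbitrary configuration. Then for every vertex $x\in\mathscr V$ and every $c\in\{0,1,\dots,M\}$, $$\lim_{t\to\infty}P(X_t(x)=c)=\binom{M-c+N-2}{N-2}\Big/\binom{M+N-1}{N-1}.$$ In particular, when $N$ and $T=M/N$ are large, $\lim_{t\to\infty}P(X_t(x)=c)\approx \frac1T e^{-c/T}$.
   Context: A configuration is a map $\xi:\mathscr V\to\mathbb N$ (number of coins at each vertex); $\mathscr C_{N,M}$ denotes the set of configurations with $\sum_{x}\xi(x)=M$. The uniform reshuffling model is the discrete-time Markov chain on $\mathscr C_{N,M}$ evolving as follows: at each time step $t$, an edge $(x,y)\in\mathscr E$ is chosen uniformly at random, $U$ is drawn uniformly from $\{0,1,\dots,X_t(x)+X_t(y)\}$ (independently of everything else), and one sets $X_{t+1}(x)=U$, $X_{t+1}(y)=X_t(x)+X_t(y)-U$, and $X_{t+1}(z)=X_t(z)$ for $z\notin\{x,y\}$. *)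

theory Defs
  imports "HOL-Probability.Probability"
begin

text \<open>A finite graph is given by a vertex set V and an edge set E of pairs (each
  undirected edge appears in some orientation; orientation is irrelevant for the
  dynamics since U is uniform on {0..X(x)+X(y)}).\<close>

definition finite_graph :: "'v set \<Rightarrow> ('v \<times> 'v) set \<Rightarrow> bool" where
  "finite_graph V E \<longleftrightarrow> finite V \<and> E \<subseteq> V \<times> V \<and> (\<forall>(x,y)\<in>E. x \<noteq> y)"

definition connected_graph :: "'v set \<Rightarrow> ('v \<times> 'v) set \<Rightarrow> bool" where
  "connected_graph V E \<longleftrightarrow> (\<forall>x\<in>V. \<forall>y\<in>V. (x, y) \<in> (E \<union> E\<inverse>)\<^sup>*)"

definition configs :: "'v set \<Rightarrow> nat \<Rightarrow> ('v \<Rightarrow> nat) set" where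
  "configs V M = {\<xi>. (\<forall>z. z \<notin> V \<longrightarrow> \<xi> z = 0) \<and> (\<Sum>z\<in>V. \<xi> z) = M}"

definition reshuffle_step :: "('v \<times> 'v) set \<Rightarrow> ('v \<Rightarrow> nat) \<Rightarrow> ('v \<Rightarrow> nat) pmf" where
  "reshuffle_step E \<xi> =
     pmf_of_set E \<bind> (\<lambda>(x, y).
       pmf_of_set {0 .. \<xi> x + \<xi> y} \<bind> (\<lambda>u.
         return_pmf (\<xi>(x := u, y := \<xi> x + \<xi> y - u))))"

primrec reshuffle_dist :: "('v \<times> 'v) set \<Rightarrow> ('v \<Rightarrow> nat) \<Rightarrow> nat \<Rightarrow> ('v \<Rightarrow> nat) pmf" where
  "reshuffle_dist E \<xi>0 0 = return_pmf \<xi>0"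
| "reshuffle_dist E \<xi>0 (Suc t) = reshuffle_dist E \<xi>0 t \<bind> reshuffle_step E"

end

theory Submission
  imports Defs "HOL-Library.Multiset"
begin

text \<open>Resampling along an edge (a, b) is the uniform distribution on the configurations
  that agree with the current one off {a, b} and carry the same number of coins on {a, b};
  as these classes partition the configurations, the one-step kernel is symmetric, hence
  doubly stochastic, and the uniform distribution on the configurations is stationary.
  The chain is lazy, and it is irreducible because a single coin can be moved along any path.
  Some power of the kernel is therefore bounded below by a constant \<delta> > 0 on all pairs of
  configurations, and this contracts the deviation from the uniform distribution by the
  factor 1 - N \<delta> (N the number of configurations). The limit probability of finding c
  coins at x is thus the fraction of configurations with c coins at x, which is computed
  by stars and bars.\<close>

section \<open>Convergence of lazy irreducible doubly stochastic chains\<close>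

primrec kernel_iter :: "('a \<Rightarrow> 'a pmf) \<Rightarrow> 'a \<Rightarrow> nat \<Rightarrow> 'a pmf" where
  "kernel_iter K \<xi> 0 = return_pmf \<xi>"
| "kernel_iter K \<xi> (Suc t) = kernel_iter K \<xi> t \<bind> K"

definition step_rel :: "('a \<Rightarrow> 'a pmf) \<Rightarrow> 'a rel" where
  "step_rel K = {(\<xi>, \<eta>). \<eta> \<in> set_pmf (K \<xi>)}"

lemma kernel_iter_add:
  "kernel_iter K \<xi> (t + n) = kernel_iter K \<xi> t \<bind> (\<lambda>\<zeta>. kernel_iter K \<zeta> n)"
  by (induction n) (simp_all add: bind_return_pmf' bind_assoc_pmf)

lemma set_kernel_iter_iff: "\<eta> \<in> set_pmf (kernel_iter K \<xi> n) \<longleftrightarrow> (\<xi>, \<eta>) \<in> step_rel K ^^ n"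
  by (induction n arbitrary: \<eta>) (auto simp: step_rel_def relcomp_unfold)

lemma weighted_sum_deviation_le:
  fixes \<mu> w :: "'a \<Rightarrow> real" and \<delta> D :: real
  assumes "finite S" and sum_\<mu>: "sum \<mu> S = 1" and sum_w: "sum w S = 1"
    and dev: "\<And>\<zeta>. \<zeta> \<in> S \<Longrightarrow> \<bar>\<mu> \<zeta> - 1 / card S\<bar> \<le> D"
    and w_ge: "\<And>\<zeta>. \<zeta> \<in> S \<Longrightarrow> \<delta> \<le> w \<zeta>"
  shows "\<bar>(\<Sum>\<zeta>\<in>S. \<mu> \<zeta> * w \<zeta>) - 1 / card S\<bar> \<le> (1 - card S * \<delta>) * D"
proof -
  define N where "N = real (card S)"
  have "S \<noteq> {}" using sum_\<mu> by auto
  then have "N > 0" using \<open>finite S\<close> by (simp add: N_def card_gt_0_iff)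
  have centred: "(\<Sum>\<zeta>\<in>S. \<mu> \<zeta> - 1 / N) = 0"
    using sum_\<mu> \<open>N > 0\<close> by (simp add: sum_subtractf N_def)
  \<comment> \<open>Centring \<mu> at 1/N makes the common lower bound \<delta> of the weights irrelevant.\<close>
  have "(\<Sum>\<zeta>\<in>S. (\<mu> \<zeta> - 1 / N) * (w \<zeta> - \<delta>))
      = (\<Sum>\<zeta>\<in>S. \<mu> \<zeta> * w \<zeta>) - (\<Sum>\<zeta>\<in>S. w \<zeta>) / N - (\<Sum>\<zeta>\<in>S. \<mu> \<zeta> - 1 / N) * \<delta>"
    by (simp add: left_diff_distrib right_diff_distrib sum_subtractf sum_distrib_right sum_divide_distrib)
  then have "(\<Sum>\<zeta>\<in>S. \<mu> \<zeta> * w \<zeta>) - 1 / N = (\<Sum>\<zeta>\<in>S. (\<mu> \<zeta> - 1 / N) * (w \<zeta> - \<delta>))"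
    by (simp add: centred sum_w)
  also have "\<bar>\<dots>\<bar> \<le> (\<Sum>\<zeta>\<in>S. \<bar>\<mu> \<zeta> - 1 / N\<bar> * (w \<zeta> - \<delta>))"
    using sum_abs[of "\<lambda>\<zeta>. (\<mu> \<zeta> - 1 / N) * (w \<zeta> - \<delta>)" S] w_ge by (simp add: abs_mult)
  also have "\<dots> \<le> (\<Sum>\<zeta>\<in>S. D * (w \<zeta> - \<delta>))"
    using dev w_ge by (intro sum_mono mult_right_mono) (auto simp: N_def)
  also have "\<dots> = (1 - N * \<delta>) * D"
    using sum_w by (simp add: sum_distrib_left[symmetric] sum_subtractf N_def algebra_simps)
  finally show ?thesis by (simp add: N_def)
qed

locale doubly_stochastic_kernel =
  fixes S :: "'a set" and K :: "'a \<Rightarrow> 'a pmf"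
  assumes finite_states: "finite S"
    and set_pmf_closed: "\<xi> \<in> S \<Longrightarrow> set_pmf (K \<xi>) \<subseteq> S"
    and column_sum: "\<eta> \<in> S \<Longrightarrow> (\<Sum>\<xi>\<in>S. pmf (K \<xi>) \<eta>) = 1"
begin

lemma set_kernel_iter_closed: "\<xi> \<in> S \<Longrightarrow> set_pmf (kernel_iter K \<xi> n) \<subseteq> S"
  by (induction n) (auto dest: set_pmf_closed)

lemma sum_pmf_kernel_iter: "\<xi> \<in> S \<Longrightarrow> (\<Sum>\<eta>\<in>S. pmf (kernel_iter K \<xi> n) \<eta>) = 1"
  by (rule sum_pmf_eq_1[OF finite_states set_kernel_iter_closed])

lemma pmf_kernel_iter_add:
  assumes "\<xi> \<in> S"
  shows "pmf (kernel_iter K \<xi> (t + n)) \<eta>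
       = (\<Sum>\<zeta>\<in>S. pmf (kernel_iter K \<xi> t) \<zeta> * pmf (kernel_iter K \<zeta> n) \<eta>)"
proof -
  have "pmf (kernel_iter K \<xi> (t + n)) \<eta>
      = (\<integral>\<zeta>. pmf (kernel_iter K \<zeta> n) \<eta> \<partial>measure_pmf (kernel_iter K \<xi> t))"
    unfolding kernel_iter_add pmf_bind ..
  also have "\<dots> = (\<Sum>\<zeta>\<in>S. pmf (kernel_iter K \<zeta> n) \<eta> * pmf (kernel_iter K \<xi> t) \<zeta>)"
    by (rule integral_measure_pmf_real)
       (use finite_states set_kernel_iter_closed[OF assms] in auto)
  finally show ?thesis by (simp add: mult.commute)
qed

lemma kernel_iter_column_sum: "\<eta> \<in> S \<Longrightarrow> (\<Sum>\<xi>\<in>S. pmf (kernel_iter K \<xi> n) \<eta>) = 1"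
proof (induction n arbitrary: \<eta>)
  case 0
  then show ?case using finite_states by (simp add: indicator_def)
next
  case (Suc n)
  have "(\<Sum>\<xi>\<in>S. pmf (kernel_iter K \<xi> (Suc n)) \<eta>)
      = (\<Sum>\<xi>\<in>S. \<Sum>\<theta>\<in>S. pmf (kernel_iter K \<xi> n) \<theta> * pmf (K \<theta>) \<eta>)"
    using pmf_kernel_iter_add[of _ n "Suc 0" \<eta>] by (intro sum.cong) (simp_all add: bind_return_pmf)
  also have "\<dots> = (\<Sum>\<theta>\<in>S. (\<Sum>\<xi>\<in>S. pmf (kernel_iter K \<xi> n) \<theta>) * pmf (K \<theta>) \<eta>)"
    by (subst sum.swap) (simp add: sum_distrib_right)
  also have "\<dots> = 1"
    using Suc.prems by (simp add: Suc.IH column_sum)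
  finally show ?case by simp
qed

lemma set_kernel_iter_mono:
  assumes lazy: "\<And>\<zeta>. \<zeta> \<in> S \<Longrightarrow> \<zeta> \<in> set_pmf (K \<zeta>)"
    and "\<xi> \<in> S" "\<eta> \<in> set_pmf (kernel_iter K \<xi> n)" "n \<le> m"
  shows "\<eta> \<in> set_pmf (kernel_iter K \<xi> m)"
  using \<open>n \<le> m\<close>
proof (induction m)
  case (Suc m)
  show ?case
  proof (cases "n = Suc m")
    case False
    then have "\<eta> \<in> set_pmf (kernel_iter K \<xi> m)" using Suc by simp
    moreover have "\<eta> \<in> S" using calculation set_kernel_iter_closed[OF \<open>\<xi> \<in> S\<close>] by blast
    ultimately show ?thesis using lazy by auto
  qed (use assms in simp)
qed (use assms in simp)

lemma uniform_hitting_time: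
  assumes lazy: "\<And>\<zeta>. \<zeta> \<in> S \<Longrightarrow> \<zeta> \<in> set_pmf (K \<zeta>)"
    and irreducible: "S \<times> S \<subseteq> (step_rel K)\<^sup>*"
  shows "\<exists>k>0. \<forall>\<xi>\<in>S. \<forall>\<eta>\<in>S. \<eta> \<in> set_pmf (kernel_iter K \<xi> k)"
proof -
  have "finite (S \<times> S)" using finite_states by simp
  moreover have "\<forall>p\<in>S \<times> S. \<exists>n. snd p \<in> set_pmf (kernel_iter K (fst p) n)"
  proof
    fix p assume "p \<in> S \<times> S"
    then have "p \<in> (step_rel K)\<^sup>*" using irreducible by blast
    then show "\<exists>n. snd p \<in> set_pmf (kernel_iter K (fst p) n)"
      unfolding rtrancl_power set_kernel_iter_iff by simp
  qed
  ultimately have "\<exists>f. \<forall>p\<in>S \<times> S. snd p \<in> set_pmf (kernel_iter K (fst p) (f p))"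
    by (rule finite_set_choice)
  then obtain f where f: "\<forall>p\<in>S \<times> S. snd p \<in> set_pmf (kernel_iter K (fst p) (f p))" ..
  define k where "k = Suc (Max (f ` (S \<times> S)))"
  have "\<eta> \<in> set_pmf (kernel_iter K \<xi> k)" if "\<xi> \<in> S" "\<eta> \<in> S" for \<xi> \<eta>
  proof (rule set_kernel_iter_mono[OF lazy \<open>\<xi> \<in> S\<close>])
    show "\<eta> \<in> set_pmf (kernel_iter K \<xi> (f (\<xi>, \<eta>)))" using f that by auto
    have "f (\<xi>, \<eta>) \<le> Max (f ` (S \<times> S))" using finite_states that by (intro Max_ge) auto
    then show "f (\<xi>, \<eta>) \<le> k" unfolding k_def by simp
  qed
  then show ?thesis by (intro exI[of _ k]) (simp add: k_def)
qed

lemma uniform_positive_transition: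
  assumes "\<And>\<zeta>. \<zeta> \<in> S \<Longrightarrow> \<zeta> \<in> set_pmf (K \<zeta>)" and "S \<times> S \<subseteq> (step_rel K)\<^sup>*"
  obtains k \<delta> where "k > 0" "\<delta> > 0" "\<And>\<xi> \<eta>. \<xi> \<in> S \<Longrightarrow> \<eta> \<in> S \<Longrightarrow> \<delta> \<le> pmf (kernel_iter K \<xi> k) \<eta>"
proof -
  obtain k where "k > 0" and k: "\<forall>\<xi>\<in>S. \<forall>\<eta>\<in>S. \<eta> \<in> set_pmf (kernel_iter K \<xi> k)"
    using uniform_hitting_time[OF assms] by blast
  define P where "P = (\<lambda>(\<xi>, \<eta>). pmf (kernel_iter K \<xi> k) \<eta>) ` (S \<times> S)"
  \<comment> \<open>The element 1 keeps the minimum defined when S is empty.\<close>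
  define \<delta> where "\<delta> = Min (insert 1 P)"
  have "finite P" unfolding P_def using finite_states by simp
  have "p > 0" if "p \<in> P" for p
    using that k unfolding P_def by (auto intro: pmf_positive)
  then have "\<delta> > 0" unfolding \<delta>_def using \<open>finite P\<close> by simp
  moreover have "\<delta> \<le> pmf (kernel_iter K \<xi> k) \<eta>" if "\<xi> \<in> S" "\<eta> \<in> S" for \<xi> \<eta>
  proof -
    have "pmf (kernel_iter K \<xi> k) \<eta> \<in> P" unfolding P_def using that by (auto intro: image_eqI[of _ _ "(\<xi>, \<eta>)"])
    then show ?thesis unfolding \<delta>_def using \<open>finite P\<close> by simp
  qed
  ultimately show ?thesis using \<open>k > 0\<close> that by blast
qed

lemma kernel_iter_deviation_le:
  fixes \<delta> :: real
  assumes "k > 0" "\<xi>0 \<in> S"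
    and \<delta>: "\<And>\<xi> \<eta>. \<xi> \<in> S \<Longrightarrow> \<eta> \<in> S \<Longrightarrow> \<delta> \<le> pmf (kernel_iter K \<xi> k) \<eta>"
  shows "\<eta> \<in> S \<Longrightarrow> \<bar>pmf (kernel_iter K \<xi>0 t) \<eta> - 1 / card S\<bar> \<le> (1 - card S * \<delta>) ^ (t div k)"
proof (induction t arbitrary: \<eta> rule: less_induct)
  case (less t)
  show ?case
  proof (cases "t < k")
    case True
    have "card S > 0" using \<open>\<xi>0 \<in> S\<close> finite_states by (auto simp: card_gt_0_iff)
    then have "0 < 1 / card S" "1 / card S \<le> 1" by simp_all
    then have "\<bar>pmf (kernel_iter K \<xi>0 t) \<eta> - 1 / card S\<bar> \<le> 1"
      using pmf_le_1[of "kernel_iter K \<xi>0 t" \<eta>] pmf_nonneg[of "kernel_iter K \<xi>0 t" \<eta>]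
      unfolding abs_le_iff by linarith
    then show ?thesis using True by simp
  next
    case False
    then have t: "t = (t - k) + k" and t_div: "t div k = Suc ((t - k) div k)"
      using \<open>k > 0\<close> by (simp_all add: le_div_geq)
    have "pmf (kernel_iter K \<xi>0 t) \<eta>
        = (\<Sum>\<zeta>\<in>S. pmf (kernel_iter K \<xi>0 (t - k)) \<zeta> * pmf (kernel_iter K \<zeta> k) \<eta>)"
      by (subst t) (rule pmf_kernel_iter_add[OF \<open>\<xi>0 \<in> S\<close>])
    moreover have "\<bar>pmf (kernel_iter K \<xi>0 (t - k)) \<zeta> - 1 / card S\<bar> \<le> (1 - card S * \<delta>) ^ ((t - k) div k)"
      if "\<zeta> \<in> S" for \<zeta>
      using less.IH[of "t - k" \<zeta>] False \<open>k > 0\<close> that by simp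
    then have "\<bar>(\<Sum>\<zeta>\<in>S. pmf (kernel_iter K \<xi>0 (t - k)) \<zeta> * pmf (kernel_iter K \<zeta> k) \<eta>) - 1 / card S\<bar>
        \<le> (1 - card S * \<delta>) * (1 - card S * \<delta>) ^ ((t - k) div k)"
      by (rule weighted_sum_deviation_le[OF finite_states sum_pmf_kernel_iter[OF \<open>\<xi>0 \<in> S\<close>]
            kernel_iter_column_sum[OF less.prems]])
         (assumption | rule \<delta>[OF _ less.prems])+
    ultimately show ?thesis using t_div by simp
  qed
qed

theorem pmf_kernel_iter_tendsto_uniform:
  assumes lazy: "\<And>\<zeta>. \<zeta> \<in> S \<Longrightarrow> \<zeta> \<in> set_pmf (K \<zeta>)"
    and irreducible: "S \<times> S \<subseteq> (step_rel K)\<^sup>*"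
    and "\<xi>0 \<in> S" "\<eta> \<in> S"
  shows "(\<lambda>t. pmf (kernel_iter K \<xi>0 t) \<eta>) \<longlonglongrightarrow> 1 / card S"
proof -
  obtain k \<delta> where "k > 0" "\<delta> > 0"
    and \<delta>: "\<And>\<xi> \<eta>. \<xi> \<in> S \<Longrightarrow> \<eta> \<in> S \<Longrightarrow> \<delta> \<le> pmf (kernel_iter K \<xi> k) \<eta>"
    using uniform_positive_transition[OF lazy irreducible] by blast
  define q where "q = 1 - card S * \<delta>"
  have "card S > 0" using \<open>\<xi>0 \<in> S\<close> finite_states by (auto simp: card_gt_0_iff)
  have "card S * \<delta> \<le> 1"
    using sum_bounded_below[of S \<delta> "\<lambda>\<xi>. pmf (kernel_iter K \<xi> k) \<xi>0"] \<delta> \<open>\<xi>0 \<in> S\<close>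
    by (simp add: kernel_iter_column_sum)
  then have "0 \<le> q" "q < 1" using \<open>card S > 0\<close> \<open>\<delta> > 0\<close> by (simp_all add: q_def)
  then have lim: "(\<lambda>t. q ^ (t div k)) \<longlonglongrightarrow> 0"
    using filterlim_compose[OF LIMSEQ_power_zero[of q] filterlim_at_top_div_const_nat[OF \<open>k > 0\<close>]]
    by simp
  have dev: "norm (pmf (kernel_iter K \<xi>0 t) \<eta> - 1 / card S) \<le> q ^ (t div k)" for t
    unfolding q_def real_norm_def by (rule kernel_iter_deviation_le[OF \<open>k > 0\<close> \<open>\<xi>0 \<in> S\<close> \<delta> \<open>\<eta> \<in> S\<close>])
  have "(\<lambda>t. pmf (kernel_iter K \<xi>0 t) \<eta> - 1 / card S) \<longlonglongrightarrow> 0"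
    using Lim_null_comparison[OF always_eventually[OF allI[OF dev]] lim] .
  then show ?thesis by (simp add: LIM_zero_cancel)
qed

corollary prob_kernel_iter_tendsto:
  assumes "\<And>\<zeta>. \<zeta> \<in> S \<Longrightarrow> \<zeta> \<in> set_pmf (K \<zeta>)" and "S \<times> S \<subseteq> (step_rel K)\<^sup>*" and "\<xi>0 \<in> S"
  shows "(\<lambda>t. measure_pmf.prob (kernel_iter K \<xi>0 t) B) \<longlonglongrightarrow> card (S \<inter> B) / card S"
proof -
  have prob: "measure_pmf.prob (kernel_iter K \<xi>0 t) B = (\<Sum>\<eta>\<in>S \<inter> B. pmf (kernel_iter K \<xi>0 t) \<eta>)" for t
  proof -
    let ?p = "kernel_iter K \<xi>0 t"
    have "B \<inter> set_pmf ?p = (S \<inter> B) \<inter> set_pmf ?p"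
      using set_kernel_iter_closed[OF \<open>\<xi>0 \<in> S\<close>] by blast
    then have "measure_pmf.prob ?p B = measure_pmf.prob ?p (S \<inter> B)"
      by (metis measure_Int_set_pmf)
    then show ?thesis using finite_states by (simp add: measure_measure_pmf_finite)
  qed
  have "(\<lambda>t. \<Sum>\<eta>\<in>S \<inter> B. pmf (kernel_iter K \<xi>0 t) \<eta>) \<longlonglongrightarrow> (\<Sum>\<eta>\<in>S \<inter> B. 1 / card S)"
    by (intro tendsto_sum pmf_kernel_iter_tendsto_uniform[OF assms]) auto
  then show ?thesis unfolding prob by simp
qed

end

lemma doubly_stochastic_kernel_if_symmetric:
  assumes "finite S" and "\<And>\<xi>. \<xi> \<in> S \<Longrightarrow> set_pmf (K \<xi>) \<subseteq> S"
    and "\<And>\<xi> \<eta>. \<xi> \<in> S \<Longrightarrow> \<eta> \<in> S \<Longrightarrow> pmf (K \<xi>) \<eta> = pmf (K \<eta>) \<xi>"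
  shows "doubly_stochastic_kernel S K"
proof
  show "(\<Sum>\<xi>\<in>S. pmf (K \<xi>) \<eta>) = 1" if "\<eta> \<in> S" for \<eta>
    using sum_pmf_eq_1[OF assms(1) assms(2)[OF that]] assms(3)[OF _ that] by (simp cong: sum.cong)
qed (use assms in auto)


section \<open>Counting configurations\<close>

lemma bij_betw_count_configs:
  assumes "finite V"
  shows "bij_betw count (multisets_of_size V M) (configs V M)"
proof (rule bij_betw_imageI)
  show "inj_on count (multisets_of_size V M)"
    by (meson count_inject inj_onI)
  show "count ` multisets_of_size V M = configs V M"
  proof (intro equalityI subsetI)
    fix f assume "f \<in> count ` multisets_of_size V M"
    then obtain X where X: "set_mset X \<subseteq> V" "size X = M" "f = count X"
      by (auto simp: multisets_of_size_def)
    have "sum (count X) V = sum (count X) (set_mset X)"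
      using X assms by (intro sum.mono_neutral_right) (auto simp: not_in_iff)
    then show "f \<in> configs V M" using X
      by (auto simp: configs_def size_multiset_overloaded_eq not_in_iff[symmetric])
  next
    fix f assume f: "f \<in> configs V M"
    have "{x. 0 < f x} \<subseteq> V" using f by (auto simp: configs_def)
    then have "finite {x. 0 < f x}" using assms by (rule finite_subset)
    then have count_f: "count (Abs_multiset f) = f" by (rule count_Abs_multiset)
    have support: "set_mset (Abs_multiset f) \<subseteq> V"
      using f by (auto simp: set_mset_def count_f configs_def)
    have "size (Abs_multiset f) = sum f V"
      unfolding size_multiset_overloaded_eq count_f
      using support assms by (intro sum.mono_neutral_left) (auto simp: set_mset_def count_f)
    then show "f \<in> count ` multisets_of_size V M"
      using f support count_f
      by (auto simp: multisets_of_size_def configs_def intro!: image_eqI[of _ _ "Abs_multiset f"])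
  qed
qed

lemma finite_configs: "finite V \<Longrightarrow> finite (configs V M)"
  using bij_betw_finite[OF bij_betw_count_configs] finite_multisets_of_size by blast

lemma card_configs:
  assumes "finite V" "V \<noteq> {}"
  shows "card (configs V M) = (M + card V - 1) choose (card V - 1)"
proof -
  have "card V \<ge> 1" using assms by (simp add: Suc_le_eq card_gt_0_iff)
  have "card (configs V M) = card (multisets_of_size V M)"
    using bij_betw_same_card[OF bij_betw_count_configs[OF assms(1)]] by simp
  also have "\<dots> = (card V + M - 1) choose M"
    using card_multisets_of_size[OF assms(1)] .
  also have "\<dots> = (M + card V - 1) choose (card V - 1)"
    using binomial_symmetric[of M "card V + M - 1"] \<open>card V \<ge> 1\<close> by (simp add: add.commute)
  finally show ?thesis .
qed

lemma card_configs_fixed_vertex: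
  assumes "finite V" "x \<in> V" "c \<le> M"
  shows "card (configs V M \<inter> {\<eta>. \<eta> x = c}) = card (configs (V - {x}) (M - c))"
proof (rule bij_betw_same_card[of "\<lambda>\<eta>. \<eta>(x := 0)"],
       rule bij_betw_byWitness[where f' = "\<lambda>\<zeta>. \<zeta>(x := c)"])
  have split_x: "sum f V = f x + sum f (V - {x})" for f :: "'a \<Rightarrow> nat"
    using assms by (simp add: sum.remove)
  have sum_upd: "sum (f(x := n)) (V - {x}) = sum f (V - {x})" for f :: "'a \<Rightarrow> nat" and n
    by (rule sum.cong) auto
  show "\<forall>\<eta>\<in>configs V M \<inter> {\<eta>. \<eta> x = c}. \<eta>(x := 0, x := c) = \<eta>" by auto
  show "\<forall>\<zeta>\<in>configs (V - {x}) (M - c). \<zeta>(x := c, x := 0) = \<zeta>"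
    by (auto simp: configs_def fun_eq_iff)
  show "(\<lambda>\<eta>. \<eta>(x := 0)) ` (configs V M \<inter> {\<eta>. \<eta> x = c}) \<subseteq> configs (V - {x}) (M - c)"
    using split_x by (auto simp: configs_def sum_upd)
  show "(\<lambda>\<zeta>. \<zeta>(x := c)) ` configs (V - {x}) (M - c) \<subseteq> configs V M \<inter> {\<eta>. \<eta> x = c}"
    using split_x assms by (auto simp: configs_def sum_upd)
qed

corollary card_configs_fixed_vertex_binomial:
  assumes "finite V" "x \<in> V" "c \<le> M" "card V \<ge> 2"
  shows "card (configs V M \<inter> {\<eta>. \<eta> x = c}) = (M - c + card V - 2) choose (card V - 2)"
proof -
  have "card (V - {x}) \<ge> 1" using assms by simp
  then have "V - {x} \<noteq> {}" by (metis card.empty not_one_le_zero)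
  have "card (configs V M \<inter> {\<eta>. \<eta> x = c}) = card (configs (V - {x}) (M - c))"
    using assms(1-3) by (rule card_configs_fixed_vertex)
  also have "\<dots> = (M - c + card (V - {x}) - 1) choose (card (V - {x}) - 1)"
    using \<open>finite V\<close> \<open>V - {x} \<noteq> {}\<close> by (intro card_configs) auto
  also have "\<dots> = (M - c + card V - 2) choose (card V - 2)"
    using assms(1,2,4) by (simp add: numeral_2_eq_2)
  finally show ?thesis .
qed


section \<open>The reshuffling chain\<close>

definition redistributions :: "('v \<Rightarrow> nat) \<Rightarrow> 'v \<Rightarrow> 'v \<Rightarrow> ('v \<Rightarrow> nat) set" where
  "redistributions \<xi> a b = {\<eta>. (\<forall>z. z \<noteq> a \<longrightarrow> z \<noteq> b \<longrightarrow> \<eta> z = \<xi> z) \<and> \<eta> a + \<eta> b = \<xi> a + \<xi> b}"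

lemma self_in_redistributions: "\<xi> \<in> redistributions \<xi> a b"
  by (simp add: redistributions_def)

lemma redistributions_eq: "\<eta> \<in> redistributions \<xi> a b \<Longrightarrow> redistributions \<eta> a b = redistributions \<xi> a b"
  by (auto simp: redistributions_def)

lemma redistributions_sym: "\<eta> \<in> redistributions \<xi> a b \<longleftrightarrow> \<xi> \<in> redistributions \<eta> a b"
  by (metis redistributions_eq self_in_redistributions)

lemma finite_redistributions: "finite (redistributions \<xi> a b)"
proof (rule finite_subset)
  let ?s = "\<xi> a + \<xi> b"
  show "redistributions \<xi> a b \<subseteq> (\<lambda>(u, v). \<xi>(a := u, b := v)) ` ({0..?s} \<times> {0..?s})"
  proof
    fix \<eta> assume \<eta>: "\<eta> \<in> redistributions \<xi> a b"
    then have "\<eta> = \<xi>(a := \<eta> a, b := \<eta> b)"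
      by (auto simp: redistributions_def fun_eq_iff)
    moreover have "\<eta> a \<le> ?s" "\<eta> b \<le> ?s"
      using \<eta> by (auto simp: redistributions_def)
    ultimately show "\<eta> \<in> (\<lambda>(u, v). \<xi>(a := u, b := v)) ` ({0..?s} \<times> {0..?s})"
      by (auto intro: image_eqI[of _ _ "(\<eta> a, \<eta> b)"])
  qed
qed simp

lemma redistributions_eq_image:
  assumes "a \<noteq> b"
  shows "redistributions \<xi> a b = (\<lambda>u. \<xi>(a := u, b := \<xi> a + \<xi> b - u)) ` {0..\<xi> a + \<xi> b}"
proof (intro equalityI subsetI)
  fix \<eta> assume \<eta>: "\<eta> \<in> redistributions \<xi> a b"
  then have "\<eta> = \<xi>(a := \<eta> a, b := \<xi> a + \<xi> b - \<eta> a)" and "\<eta> a \<le> \<xi> a + \<xi> b"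
    using assms by (auto simp: redistributions_def fun_eq_iff)
  then show "\<eta> \<in> (\<lambda>u. \<xi>(a := u, b := \<xi> a + \<xi> b - u)) ` {0..\<xi> a + \<xi> b}"
    by auto
qed (use assms in \<open>auto simp: redistributions_def\<close>)

lemma redistribution_uniform:
  assumes "a \<noteq> b"
  shows "pmf_of_set {0..\<xi> a + \<xi> b} \<bind> (\<lambda>u. return_pmf (\<xi>(a := u, b := \<xi> a + \<xi> b - u)))
       = pmf_of_set (redistributions \<xi> a b)"
proof -
  have "inj_on (\<lambda>u. \<xi>(a := u, b := \<xi> a + \<xi> b - u)) {0..\<xi> a + \<xi> b}"
    using assms by (intro inj_onI) (metis fun_upd_other fun_upd_same)
  then show ?thesis
    unfolding redistributions_eq_image[OF assms] map_pmf_def[symmetric]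
    by (simp add: map_pmf_of_set_inj)
qed

lemma pmf_redistribution_sym:
  "pmf (pmf_of_set (redistributions \<xi> a b)) \<eta> = pmf (pmf_of_set (redistributions \<eta> a b)) \<xi>"
proof -
  have pmf_eq: "pmf (pmf_of_set (redistributions \<zeta> a b)) \<theta>
      = indicator (redistributions \<zeta> a b) \<theta> / card (redistributions \<zeta> a b)" for \<zeta> \<theta>
    using self_in_redistributions[of \<zeta> a b] by (intro pmf_of_set finite_redistributions) auto
  show ?thesis
    unfolding pmf_eq using redistributions_eq[of \<eta> \<xi> a b] redistributions_sym[of \<eta> \<xi> a b]
    by (cases "\<eta> \<in> redistributions \<xi> a b") simp_all
qed

lemma set_pmf_of_redistributions: "set_pmf (pmf_of_set (redistributions \<xi> a b)) = redistributions \<xi> a b"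
  using self_in_redistributions[of \<xi> a b] by (intro set_pmf_of_set finite_redistributions) auto

lemma redistributions_subset_configs:
  assumes "\<xi> \<in> configs V M" "finite V" "a \<in> V" "b \<in> V"
  shows "redistributions \<xi> a b \<subseteq> configs V M"
proof
  fix \<eta> assume \<eta>: "\<eta> \<in> redistributions \<xi> a b"
  have "{a, b} \<subseteq> V" using assms by simp
  then have "sum \<eta> V = sum \<eta> (V - {a, b}) + sum \<eta> {a, b}"
    and "sum \<xi> V = sum \<xi> (V - {a, b}) + sum \<xi> {a, b}"
    using \<open>finite V\<close> by (simp_all add: sum.subset_diff)
  moreover have "sum \<eta> (V - {a, b}) = sum \<xi> (V - {a, b})"
    using \<eta> by (intro sum.cong) (auto simp: redistributions_def)
  moreover have "sum \<eta> {a, b} = sum \<xi> {a, b}"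
    using \<eta> by (cases "a = b") (auto simp: redistributions_def)
  ultimately show "\<eta> \<in> configs V M"
    using \<eta> assms by (auto simp: configs_def redistributions_def)
qed

definition move_coin :: "('v \<Rightarrow> nat) \<Rightarrow> 'v \<Rightarrow> 'v \<Rightarrow> 'v \<Rightarrow> nat" where
  "move_coin \<xi> v w = (\<lambda>z. \<xi> z - (if z = v then 1 else 0) + (if z = w then 1 else 0))"

lemma move_coin_self: "1 \<le> \<xi> v \<Longrightarrow> move_coin \<xi> v v = \<xi>"
  by (auto simp: move_coin_def)

lemma move_coin_trans: "move_coin (move_coin \<xi> u v) v w = move_coin \<xi> u w"
  by (simp add: move_coin_def)

lemma move_coin_in_redistributions:
  "v \<noteq> w \<Longrightarrow> 1 \<le> \<xi> v \<Longrightarrow> move_coin \<xi> v w \<in> redistributions \<xi> v w \<inter> redistributions \<xi> w v"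
  by (auto simp: move_coin_def redistributions_def)

lemma reshuffle_dist_eq_kernel_iter: "reshuffle_dist E \<xi> t = kernel_iter (reshuffle_step E) \<xi> t"
  by (induction t) simp_all

lemma connected_graph_edges_nonempty:
  assumes "connected_graph V E" "card V \<ge> 2" "x \<in> V" "finite V"
  shows "E \<noteq> {}"
proof -
  obtain y where "y \<in> V" "y \<noteq> x"
    using assms(2-4) by (metis card_le_Suc0_iff_eq not_less_eq_eq numeral_2_eq_2)
  then have "(x, y) \<in> (E \<union> E\<inverse>)\<^sup>*"
    using assms(1,3) by (auto simp: connected_graph_def)
  with \<open>y \<noteq> x\<close> show ?thesis by (auto elim: converse_rtranclE)
qed

locale reshuffling =
  fixes V :: "'v set" and E :: "('v \<times> 'v) set"
  assumes graph: "finite_graph V E" and edges_nonempty: "E \<noteq> {}"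
begin

lemma finite_vertices: "finite V"
  using graph by (simp add: finite_graph_def)

lemma finite_edges: "finite E"
  using graph unfolding finite_graph_def by (meson finite_SigmaI finite_subset)

lemma edge_vertices: "(a, b) \<in> E \<Longrightarrow> a \<in> V \<and> b \<in> V \<and> a \<noteq> b"
  using graph by (auto simp: finite_graph_def)

lemma reshuffle_step_redistributions:
  "reshuffle_step E \<xi> = pmf_of_set E \<bind> (\<lambda>(a, b). pmf_of_set (redistributions \<xi> a b))"
  unfolding reshuffle_step_def
proof (rule bind_pmf_cong[OF refl])
  fix e assume "e \<in> set_pmf (pmf_of_set E)"
  then have "e \<in> E" using edges_nonempty finite_edges by simp
  then show "(case e of (a, b) \<Rightarrow> pmf_of_set {0..\<xi> a + \<xi> b} \<bind>
          (\<lambda>u. return_pmf (\<xi>(a := u, b := \<xi> a + \<xi> b - u))))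
      = (case e of (a, b) \<Rightarrow> pmf_of_set (redistributions \<xi> a b))"
    by (cases e) (simp add: redistribution_uniform edge_vertices)
qed

lemma set_reshuffle_step: "set_pmf (reshuffle_step E \<xi>) = (\<Union>(a, b)\<in>E. redistributions \<xi> a b)"
  using edges_nonempty finite_edges
  by (simp add: reshuffle_step_redistributions split_def set_pmf_of_redistributions)

lemma pmf_reshuffle_step_sym: "pmf (reshuffle_step E \<xi>) \<eta> = pmf (reshuffle_step E \<eta>) \<xi>"
  unfolding reshuffle_step_redistributions pmf_bind
  by (intro Bochner_Integration.integral_cong) (auto simp: pmf_redistribution_sym)

lemma set_reshuffle_step_configs: "\<xi> \<in> configs V M \<Longrightarrow> set_pmf (reshuffle_step E \<xi>) \<subseteq> configs V M"
  using redistributions_subset_configs[OF _ finite_vertices] edge_vertices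
  by (fastforce simp: set_reshuffle_step)

lemma reshuffle_step_lazy: "\<xi> \<in> set_pmf (reshuffle_step E \<xi>)"
  using edges_nonempty by (auto simp: set_reshuffle_step self_in_redistributions)

lemma move_coin_along_edge:
  assumes "(v, w) \<in> E \<union> E\<inverse>" "1 \<le> \<xi> v"
  shows "(\<xi>, move_coin \<xi> v w) \<in> step_rel (reshuffle_step E)"
  using assms move_coin_in_redistributions[of v w \<xi>] edge_vertices
  by (auto simp: step_rel_def set_reshuffle_step)

lemma move_coin_along_path:
  assumes "(v, w) \<in> (E \<union> E\<inverse>)\<^sup>*" "1 \<le> \<xi> v"
  shows "(\<xi>, move_coin \<xi> v w) \<in> (step_rel (reshuffle_step E))\<^sup>*"
  using assms(1)
proof (induction rule: rtrancl_induct)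
  case base
  then show ?case using assms(2) by (simp add: move_coin_self)
next
  case (step w w')
  have "1 \<le> move_coin \<xi> v w w" by (simp add: move_coin_def)
  then have "(move_coin \<xi> v w, move_coin \<xi> v w') \<in> step_rel (reshuffle_step E)"
    using move_coin_along_edge[OF step(2), of "move_coin \<xi> v w"] by (simp add: move_coin_trans)
  with step.IH show ?case by (rule rtrancl_into_rtrancl)
qed

lemma step_rel_reshuffle_sym: "sym (step_rel (reshuffle_step E))"
  by (rule symI) (auto simp: step_rel_def set_pmf_iff pmf_reshuffle_step_sym)

lemma reaches_concentrated_config:
  assumes "connected_graph V E" "x0 \<in> V" "\<xi> \<in> configs V M"
  shows "(\<xi>, \<lambda>z. if z = x0 then M else 0) \<in> (step_rel (reshuffle_step E))\<^sup>*"
  using assms(3)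
proof (induction "sum \<xi> (V - {x0})" arbitrary: \<xi> rule: less_induct)
  case less
  show ?case
  proof (cases "\<exists>v\<in>V - {x0}. 1 \<le> \<xi> v")
    case True
    then obtain v where v: "v \<in> V" "v \<noteq> x0" "1 \<le> \<xi> v" by blast
    let ?\<zeta> = "move_coin \<xi> v x0"
    have "(v, x0) \<in> (E \<union> E\<inverse>)\<^sup>*"
      using assms(1,2) v(1) by (simp add: connected_graph_def)
    then have to_\<zeta>: "(\<xi>, ?\<zeta>) \<in> (step_rel (reshuffle_step E))\<^sup>*"
      using v(3) by (rule move_coin_along_path)
    have "?\<zeta> \<in> configs V M"
      using redistributions_subset_configs[OF less.prems finite_vertices v(1) assms(2)]
        move_coin_in_redistributions[of v x0 \<xi>] v by blast
    moreover have "sum ?\<zeta> (V - {x0}) < sum \<xi> (V - {x0})"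
    proof -
      have "v \<in> V - {x0}" "finite (V - {x0})" using v finite_vertices by auto
      moreover have "sum ?\<zeta> (V - {x0} - {v}) = sum \<xi> (V - {x0} - {v})"
        by (rule sum.cong) (auto simp: move_coin_def)
      moreover have "?\<zeta> v = \<xi> v - 1" using v(2) by (simp add: move_coin_def)
      ultimately show ?thesis
        using v(3) sum.remove[of "V - {x0}" v ?\<zeta>] sum.remove[of "V - {x0}" v \<xi>] by simp
    qed
    ultimately show ?thesis using less.hyps to_\<zeta> by (meson rtrancl_trans)
  next
    case False
    then have "\<xi> = (\<lambda>z. if z = x0 then M else 0)"
      using less.prems assms(2) finite_vertices
      by (auto simp: configs_def fun_eq_iff sum.remove not_less_eq_eq)
    then show ?thesis by simp
  qed
qed

lemma configs_irreducible:
  assumes "connected_graph V E"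
  shows "configs V M \<times> configs V M \<subseteq> (step_rel (reshuffle_step E))\<^sup>*"
proof clarify
  fix \<xi> \<eta> assume "\<xi> \<in> configs V M" "\<eta> \<in> configs V M"
  obtain x0 where "x0 \<in> V" using edges_nonempty edge_vertices by fast
  let ?R = "(step_rel (reshuffle_step E))\<^sup>*"
  have "(\<xi>, \<lambda>z. if z = x0 then M else 0) \<in> ?R" "(\<eta>, \<lambda>z. if z = x0 then M else 0) \<in> ?R"
    using reaches_concentrated_config[OF assms \<open>x0 \<in> V\<close>] \<open>\<xi> \<in> _\<close> \<open>\<eta> \<in> _\<close> by auto
  then show "(\<xi>, \<eta>) \<in> ?R"
    using sym_rtrancl[OF step_rel_reshuffle_sym] by (meson rtrancl_trans symD)
qed

end

theorem theorem1:
  fixes V :: "'v set" and E :: "('v \<times> 'v) set" and M c :: nat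
    and \<xi>0 :: "'v \<Rightarrow> nat" and x :: 'v
  assumes "finite_graph V E" and "connected_graph V E"
    and "card V \<ge> 2"
    and "\<xi>0 \<in> configs V M"
    and "x \<in> V" and "c \<le> M"
  shows "(\<lambda>t. measure_pmf.prob (reshuffle_dist E \<xi>0 t) {\<xi>. \<xi> x = c})
           \<longlonglongrightarrow> real ((M - c + card V - 2) choose (card V - 2))
                / real ((M + card V - 1) choose (card V - 1))"
proof -
  have "finite V" using assms(1) by (simp add: finite_graph_def)
  have "E \<noteq> {}"
    using assms(2,3,5) \<open>finite V\<close> by (rule connected_graph_edges_nonempty)
  then interpret reshuffling V E using assms(1) by unfold_locales
  interpret doubly_stochastic_kernel "configs V M" "reshuffle_step E"
    using finite_configs[OF finite_vertices] set_reshuffle_step_configs pmf_reshuffle_step_sym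
    by (intro doubly_stochastic_kernel_if_symmetric)
  have "(\<lambda>t. measure_pmf.prob (reshuffle_dist E \<xi>0 t) {\<xi>. \<xi> x = c})
      \<longlonglongrightarrow> card (configs V M \<inter> {\<xi>. \<xi> x = c}) / card (configs V M)"
    unfolding reshuffle_dist_eq_kernel_iter
    using reshuffle_step_lazy configs_irreducible[OF assms(2)] assms(4)
    by (rule prob_kernel_iter_tendsto)
  moreover have "V \<noteq> {}" using assms(5) by blast
  ultimately show ?thesis
    using card_configs_fixed_vertex_binomial[OF \<open>finite V\<close> assms(5,6,3)]
      card_configs[OF \<open>finite V\<close>] by simp
qed

end
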